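(* For every $\varepsilon\in(0,1]$ there exists $b_0$ such that for every $b\geq b_0$ there exists $n_0$ such that for every $n\geq n_0$ the following holds. Let $G$ be an $(n,\varepsilon)$-digraph and let $\mathbf{m}$ be a perfect fractional matching of $G$ with $h(\mathbf{m})\geq n\log\frac n2+\varepsilon n$. Then there is a $b$-normal perfect fractional matching $\mathbf{x}$ of $G$ with $h(\mathbf{x})\geq h(\mathbf{m})-\varepsilon n$.
   Context: $\log=\log_2$. Digraphs have no loops and at most one edge from $v$ to $w$ per ordered pair. An $(n,\varepsilon)$-digraph is a digraph $G$ on $n$ vertices with $\min_v\min\{|N^+(v)|,|N^-(v)|\}\geq(\frac12+\varepsilon)n$. A perfect fractional matching of a digraph $G$ is $\mathbf{x}\colon E(G)\to\mathbb{R}_{\geq0}$ with $\sum_{w\in N^+(v)}\mathbf{x}_{vw}=1=\sum_{w\in N^-(v)}\mathbf{x}_{wv}$ for every vertex $v$. It is $b$-normal if $\frac1{b|V(G)|}\leq\mathbf{x}_e\leq\frac b{|V(G)|}$ for all $e\in E(G)$. Its entropy is $h(\mathbf{x})=\sum_{e\in E(G)}\mathbf{x}_e\log\frac1{\mathbf{x}_e}$. *)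

theory Defs
  imports "HOL-Analysis.Analysis"
begin

definition digraph :: "'a set \<Rightarrow> ('a \<times> 'a) set \<Rightarrow> bool" where
  "digraph V E \<longleftrightarrow> finite V \<and> E \<subseteq> V \<times> V \<and> (\<forall>v. (v, v) \<notin> E)"

definition out_nbrs :: "('a \<times> 'a) set \<Rightarrow> 'a \<Rightarrow> 'a set" where
  "out_nbrs E v = {w. (v, w) \<in> E}"

definition in_nbrs :: "('a \<times> 'a) set \<Rightarrow> 'a \<Rightarrow> 'a set" where
  "in_nbrs E v = {w. (w, v) \<in> E}"

definition n_eps_digraph :: "nat \<Rightarrow> real \<Rightarrow> 'a set \<Rightarrow> ('a \<times> 'a) set \<Rightarrow> bool" where
  "n_eps_digraph n eps V E \<longleftrightarrow> digraph V E \<and> card V = n \<and>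
     (\<forall>v\<in>V. real (card (out_nbrs E v)) \<ge> (1/2 + eps) * real n \<and>
             real (card (in_nbrs E v)) \<ge> (1/2 + eps) * real n)"

text \<open>A perfect fractional matching: a function on the edges (values off E are
irrelevant), nonnegative on E, with all out-sums and in-sums equal to 1.\<close>
definition perfect_frac_matching :: "'a set \<Rightarrow> ('a \<times> 'a) set \<Rightarrow> ('a \<times> 'a \<Rightarrow> real) \<Rightarrow> bool" where
  "perfect_frac_matching V E x \<longleftrightarrow>
     (\<forall>e\<in>E. x e \<ge> 0) \<and>
     (\<forall>v\<in>V. (\<Sum>w\<in>out_nbrs E v. x (v, w)) = 1 \<and> (\<Sum>w\<in>in_nbrs E v. x (w, v)) = 1)"

definition b_normal :: "real \<Rightarrow> 'a set \<Rightarrow> ('a \<times> 'a) set \<Rightarrow> ('a \<times> 'a \<Rightarrow> real) \<Rightarrow> bool" where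
  "b_normal b V E x \<longleftrightarrow>
     (\<forall>e\<in>E. 1 / (b * real (card V)) \<le> x e \<and> x e \<le> b / real (card V))"

definition entropy :: "('a \<times> 'a) set \<Rightarrow> ('a \<times> 'a \<Rightarrow> real) \<Rightarrow> real" where
  "entropy E x = (\<Sum>e\<in>E. if x e = 0 then 0 else x e * log 2 (1 / x e))"

end

theory Submission
  imports Defs "HOL-Real_Asymp.Real_Asymp"
begin

(*
  Take a perfect fractional matching x of maximum entropy; it exists by compactness.
  Shifting weight s > 0 around an alternating closed walk keeps x a perfect fractional
  matching, so maximality together with the concavity of t log(1/t) yields the exchange
  inequalities x(r1,c1) x(r2,c2) x(r3,c3) <= x(r1,c2) x(r2,c3) x(r3,c1) for walks of length
  six, and x(r1,c1) x(r2,c2) <= x(r1,c2) x(r2,c1) for walks of length four.  Summing them over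
  the many common neighbours provided by the degree condition gives
  eps^2/n <= x_e <= 1/(2 eps n) on every edge, so x is b-normal for every b >= 1/eps^2, while
  h(x) >= h(m) by maximality.
*)

definition entropy_term :: "real \<Rightarrow> real" where
  "entropy_term z = (if z = 0 then 0 else z * log 2 (1 / z))"

lemma entropy_term_eq: "entropy_term z = - (z * ln z) / ln 2"
  by (simp add: entropy_term_def log_def ln_div)

lemma entropy_eq_sum_entropy_term: "entropy E x = (\<Sum>e\<in>E. entropy_term (x e))"
  by (simp add: entropy_def entropy_term_def)

lemma entropy_term_le_tangent:
  assumes "a > 0" "b \<ge> 0"
  shows "entropy_term b \<le> entropy_term a - (b - a) * (ln a + 1) / ln 2"
proof -
  have "b * ln a - b * ln b \<le> a - b"
  proof (cases "b = 0")
    case False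
    then have "b > 0" using assms by simp
    have "ln (a / b) \<le> a / b - 1" using assms \<open>b > 0\<close> by (intro ln_le_minus_one) simp
    then have "b * ln (a / b) \<le> b * (a / b - 1)" using \<open>b > 0\<close> by (intro mult_left_mono) auto
    then show ?thesis using assms \<open>b > 0\<close> by (simp add: ln_div algebra_simps)
  qed (use assms in simp)
  then have "- (b * ln b) \<le> - (a * ln a) - (b - a) * (ln a + 1)"
    by (simp add: algebra_simps)
  from divide_right_mono [OF this, of "ln 2"] show ?thesis
    unfolding entropy_term_eq by (simp add: diff_divide_distrib)
qed

lemma continuous_on_entropy_term: "continuous_on {0..} entropy_term"
proof -
  have "continuous_on {0..} (\<lambda>z::real. z * ln z)"
    unfolding continuous_on_def
  proof
    fix z :: real assume z: "z \<in> {0..}"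
    show "((\<lambda>z. z * ln z) \<longlongrightarrow> z * ln z) (at z within {0..})"
    proof (cases "z = 0")
      case True
      have "((\<lambda>z::real. z * ln z) \<longlongrightarrow> 0) (at_right 0)" by real_asymp
      then show ?thesis using True by (simp add: at_within_Ici_at_right)
    next
      case False
      then have "isCont (\<lambda>z. z * ln z) z" using z by (auto intro!: continuous_intros)
      then show ?thesis by (simp add: isCont_def tendsto_within_subset [OF _ subset_UNIV])
    qed
  qed
  then show ?thesis
    unfolding entropy_term_eq [abs_def]
    by (intro continuous_on_divide continuous_on_minus continuous_on_const) auto
qed

lemma finite_out_nbrs: "finite E \<Longrightarrow> finite (out_nbrs E v)"
  by (rule finite_subset [of _ "snd ` E"]) (force simp: out_nbrs_def)+

lemma finite_in_nbrs: "finite E \<Longrightarrow> finite (in_nbrs E v)"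
  by (rule finite_subset [of _ "fst ` E"]) (force simp: in_nbrs_def)+

lemma sum_edges_by_out_nbrs:
  assumes "finite V" "E \<subseteq> V \<times> V"
  shows "(\<Sum>e\<in>E. f e) = (\<Sum>v\<in>V. \<Sum>w\<in>out_nbrs E v. f (v, w))"
proof -
  have "E = Sigma V (out_nbrs E)" using assms(2) by (auto simp: out_nbrs_def)
  moreover have "finite E" using assms by (meson finite_SigmaI finite_subset)
  ultimately show ?thesis
    using assms(1) by (simp add: sum.Sigma finite_out_nbrs)
qed

lemma sum_edges_by_in_nbrs:
  assumes "finite V" "E \<subseteq> V \<times> V"
  shows "(\<Sum>e\<in>E. f e) = (\<Sum>w\<in>V. \<Sum>v\<in>in_nbrs E w. f (v, w))"
proof -
  have swap: "out_nbrs (prod.swap ` E) w = in_nbrs E w" for w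
    by (force simp: out_nbrs_def in_nbrs_def)
  have "(\<Sum>e\<in>E. f e) = (\<Sum>e\<in>prod.swap ` E. f (prod.swap e))"
    by (simp add: sum.reindex)
  also have "\<dots> = (\<Sum>w\<in>V. \<Sum>v\<in>out_nbrs (prod.swap ` E) w. f (prod.swap (w, v)))"
    using assms by (intro sum_edges_by_out_nbrs) auto
  finally show ?thesis by (simp add: swap)
qed

lemma perfect_frac_matching_cong:
  assumes "\<And>e. e \<in> E \<Longrightarrow> x e = y e"
  shows "perfect_frac_matching V E x \<longleftrightarrow> perfect_frac_matching V E y"
proof -
  have "(\<Sum>w\<in>out_nbrs E v. x (v, w)) = (\<Sum>w\<in>out_nbrs E v. y (v, w))"
    "(\<Sum>w\<in>in_nbrs E v. x (w, v)) = (\<Sum>w\<in>in_nbrs E v. y (w, v))" for v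
    using assms by (auto intro!: sum.cong simp: out_nbrs_def in_nbrs_def)
  then show ?thesis using assms by (simp add: perfect_frac_matching_def)
qed

lemma perfect_frac_matching_row_mass_le_1:
  assumes "perfect_frac_matching V E x" "finite E" "v \<in> V"
  shows "(\<Sum>w\<in>out_nbrs E v \<inter> S. x (v, w)) \<le> 1"
proof -
  have "(\<Sum>w\<in>out_nbrs E v \<inter> S. x (v, w)) \<le> (\<Sum>w\<in>out_nbrs E v. x (v, w))"
    using assms by (intro sum_mono2 finite_out_nbrs)
      (auto simp: perfect_frac_matching_def out_nbrs_def)
  also have "\<dots> = 1" using assms by (simp add: perfect_frac_matching_def)
  finally show ?thesis .
qed

lemma perfect_frac_matching_le_1:
  assumes "perfect_frac_matching V E x" "finite E" "E \<subseteq> V \<times> V" "(v, w) \<in> E"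
  shows "x (v, w) \<le> 1"
proof -
  have "x (v, w) = (\<Sum>w'\<in>out_nbrs E v \<inter> {w}. x (v, w'))"
    using assms(4) by (simp add: out_nbrs_def)
  also have "\<dots> \<le> 1"
    using assms by (intro perfect_frac_matching_row_mass_le_1) auto
  finally show ?thesis .
qed

lemma compactin_perfect_frac_matchings:
  assumes "finite V" "finite E"
  shows "compactin (product_topology (\<lambda>_. top_of_set {0..1::real}) E)
           {x \<in> PiE E (\<lambda>_. {0..1}). perfect_frac_matching V E x}"
proof -
  define X where "X = product_topology (\<lambda>_. top_of_set {0..1::real}) E"
  have topX: "topspace X = PiE E (\<lambda>_. {0..1})" by (simp add: X_def)
  have proj: "continuous_map X euclideanreal (\<lambda>x. x e)" if "e \<in> E" for e
    using continuous_map_product_projection [OF that, of "\<lambda>_. top_of_set {0..1::real}"]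
    by (simp add: X_def continuous_map_in_subtopology)
  define defect where "defect x = (\<Sum>v\<in>V. \<bar>(\<Sum>w\<in>out_nbrs E v. x (v, w)) - 1\<bar>
      + \<bar>(\<Sum>w\<in>in_nbrs E v. x (w, v)) - 1\<bar>)" for x :: "'a \<times> 'a \<Rightarrow> real"
  have "continuous_map X euclideanreal defect"
    unfolding defect_def using assms
    by (intro continuous_map_sum continuous_map_add continuous_map_real_abs continuous_map_diff
        finite_out_nbrs finite_in_nbrs proj)
      (auto simp: out_nbrs_def in_nbrs_def)
  then have "closedin X {x \<in> topspace X. defect x \<in> {0}}"
    by (rule closedin_continuous_map_preimage) simp
  moreover have "defect x = 0 \<longleftrightarrow> perfect_frac_matching V E x" if "x \<in> topspace X" for x
    using that assms(1) unfolding defect_def perfect_frac_matching_def topX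
    by (simp add: sum_nonneg_eq_0_iff add_nonneg_eq_0_iff PiE_iff)
  then have "{x \<in> topspace X. defect x \<in> {0}} = {x \<in> topspace X. perfect_frac_matching V E x}"
    by auto
  ultimately have "closedin X {x \<in> topspace X. perfect_frac_matching V E x}"
    by simp
  moreover have "compactin X (topspace X)"
    unfolding topX X_def by (simp add: compactin_PiE compactin_subtopology)
  ultimately have "compactin X ({x \<in> topspace X. perfect_frac_matching V E x} \<inter> topspace X)"
    by (rule closed_Int_compactin)
  moreover have "{x \<in> topspace X. perfect_frac_matching V E x} \<inter> topspace X
      = {x \<in> PiE E (\<lambda>_. {0..1}). perfect_frac_matching V E x}"
    by (auto simp: topX)
  ultimately show ?thesis by (simp add: X_def)
qed

lemma max_entropy_perfect_frac_matching_exists: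
  assumes "finite V" "E \<subseteq> V \<times> V" "perfect_frac_matching V E m"
  obtains x where "perfect_frac_matching V E x"
    "\<And>y. perfect_frac_matching V E y \<Longrightarrow> entropy E y \<le> entropy E x"
proof -
  have "finite E" using assms by (meson finite_SigmaI finite_subset)
  define X where "X = product_topology (\<lambda>_. top_of_set {0..1::real}) E"
  define P where "P = {x \<in> PiE E (\<lambda>_. {0..1}). perfect_frac_matching V E x}"
  define ent where "ent x = (\<Sum>e\<in>E. entropy_term (x e))" for x :: "'a \<times> 'a \<Rightarrow> real"
  have "continuous_map (top_of_set {0..1}) euclideanreal entropy_term"
    unfolding continuous_map_iff_continuous
    by (rule continuous_on_subset [OF continuous_on_entropy_term]) auto
  from continuous_map_compose [OF continuous_map_product_projection
      [where X = "\<lambda>_. top_of_set {0..1::real}" and I = E] this]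
  have "continuous_map X euclideanreal ent"
    unfolding ent_def X_def by (intro continuous_map_sum \<open>finite E\<close>) (simp add: o_def)
  then have "compact (ent ` P)"
    using image_compactin compactin_perfect_frac_matchings [OF assms(1) \<open>finite E\<close>]
    unfolding P_def X_def by fastforce
  have restrict_in_P: "restrict y E \<in> P" if "perfect_frac_matching V E y" for y
    using that perfect_frac_matching_le_1 [OF that \<open>finite E\<close> assms(2)]
      perfect_frac_matching_cong [of E "restrict y E" y V]
    by (auto simp: P_def perfect_frac_matching_def)
  have ent_restrict: "ent (restrict y E) = entropy E y" for y
    unfolding ent_def entropy_eq_sum_entropy_term by (rule sum.cong) auto
  have "ent ` P \<noteq> {}" using restrict_in_P [OF assms(3)] by auto
  with \<open>compact (ent ` P)\<close> obtain x where "x \<in> P" and x_max: "\<forall>y\<in>P. ent y \<le> ent x"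
    using compact_attains_sup [of "ent ` P"] by blast
  show ?thesis
  proof (rule that)
    show "perfect_frac_matching V E x" using \<open>x \<in> P\<close> by (simp add: P_def)
    fix y assume "perfect_frac_matching V E y"
    then have "ent (restrict y E) \<le> ent x" using x_max restrict_in_P by blast
    then show "entropy E y \<le> entropy E x"
      by (simp add: ent_restrict ent_def entropy_eq_sum_entropy_term)
  qed
qed

lemma sum_out_nbrs_of_bool_eq:
  assumes "finite E" "(a, b) \<in> E"
  shows "(\<Sum>w\<in>out_nbrs E v. of_bool ((v, w) = (a, b))) = (of_bool (v = a) :: real)"
proof (cases "v = a")
  case True
  moreover have "b \<in> out_nbrs E a" using assms(2) by (simp add: out_nbrs_def)
  ultimately show ?thesis using finite_out_nbrs [OF assms(1)] by (simp add: of_bool_def sum.delta)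
qed simp

lemma sum_in_nbrs_of_bool_eq:
  assumes "finite E" "(a, b) \<in> E"
  shows "(\<Sum>w\<in>in_nbrs E v. of_bool ((w, v) = (a, b))) = (of_bool (v = b) :: real)"
proof (cases "v = b")
  case True
  moreover have "a \<in> in_nbrs E b" using assms(2) by (simp add: in_nbrs_def)
  ultimately show ?thesis using finite_in_nbrs [OF assms(1)] by (simp add: of_bool_def sum.delta)
qed simp

lemma sum_of_bool_eq_mult:
  "finite E \<Longrightarrow> p \<in> E \<Longrightarrow> (\<Sum>e\<in>E. of_bool (e = p) * g e) = (g p :: real)"
  by (simp add: of_bool_def if_distrib [of "\<lambda>c. c * g _"] sum.delta' cong: if_cong)

(* The six edges need not be distinct, hence a sum of indicators. *)
definition hexagon_circulation :: "'a \<Rightarrow> 'a \<Rightarrow> 'a \<Rightarrow> 'a \<Rightarrow> 'a \<Rightarrow> 'a \<Rightarrow> 'a \<times> 'a \<Rightarrow> real" where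
  "hexagon_circulation r1 c1 r2 c2 r3 c3 e =
     of_bool (e = (r1, c2)) + of_bool (e = (r2, c3)) + of_bool (e = (r3, c1))
     - of_bool (e = (r1, c1)) - of_bool (e = (r2, c2)) - of_bool (e = (r3, c3))"

lemma hexagon_circulation_out_sum:
  assumes "finite E"
    and "(r1, c1) \<in> E" "(r2, c2) \<in> E" "(r3, c3) \<in> E" "(r1, c2) \<in> E" "(r2, c3) \<in> E" "(r3, c1) \<in> E"
  shows "(\<Sum>w\<in>out_nbrs E v. hexagon_circulation r1 c1 r2 c2 r3 c3 (v, w)) = 0"
  unfolding hexagon_circulation_def sum.distrib sum_subtractf
    assms(2-7) [THEN sum_out_nbrs_of_bool_eq [OF assms(1)]]
  by simp

lemma hexagon_circulation_in_sum:
  assumes "finite E"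
    and "(r1, c1) \<in> E" "(r2, c2) \<in> E" "(r3, c3) \<in> E" "(r1, c2) \<in> E" "(r2, c3) \<in> E" "(r3, c1) \<in> E"
  shows "(\<Sum>w\<in>in_nbrs E v. hexagon_circulation r1 c1 r2 c2 r3 c3 (w, v)) = 0"
  unfolding hexagon_circulation_def sum.distrib sum_subtractf
    assms(2-7) [THEN sum_in_nbrs_of_bool_eq [OF assms(1)]]
  by simp

lemma sum_hexagon_circulation_mult:
  assumes "finite E"
    and "(r1, c1) \<in> E" "(r2, c2) \<in> E" "(r3, c3) \<in> E" "(r1, c2) \<in> E" "(r2, c3) \<in> E" "(r3, c1) \<in> E"
  shows "(\<Sum>e\<in>E. hexagon_circulation r1 c1 r2 c2 r3 c3 e * g e)
    = g (r1, c2) + g (r2, c3) + g (r3, c1) - g (r1, c1) - g (r2, c2) - g (r3, c3)"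
  unfolding hexagon_circulation_def left_diff_distrib distrib_right sum.distrib sum_subtractf
    assms(2-7) [THEN sum_of_bool_eq_mult [OF assms(1)]]
  by simp

lemma sum_out_nbrs_Int_swap:
  assumes "finite V" "E \<subseteq> V \<times> V" "S \<subseteq> V"
  shows "(\<Sum>t\<in>V. \<Sum>c\<in>out_nbrs E t \<inter> S. h t c) = (\<Sum>c\<in>S. \<Sum>t\<in>in_nbrs E c. h t c)"
proof -
  have "(\<Sum>t\<in>V. \<Sum>c\<in>out_nbrs E t \<inter> S. h t c)
      = (\<Sum>t\<in>V. \<Sum>c\<in>out_nbrs E t. if c \<in> S then h t c else 0)"
    using assms by (simp add: sum.inter_restrict finite_out_nbrs finite_subset)
  also have "\<dots> = (\<Sum>(t, c)\<in>E. if c \<in> S then h t c else 0)"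
    by (simp add: sum_edges_by_out_nbrs [OF assms(1,2)])
  also have "\<dots> = (\<Sum>c\<in>V. \<Sum>t\<in>in_nbrs E c. if c \<in> S then h t c else 0)"
    by (simp add: sum_edges_by_in_nbrs [OF assms(1,2)])
  also have "\<dots> = (\<Sum>c\<in>V. if c \<in> S then (\<Sum>t\<in>in_nbrs E c. h t c) else 0)"
    by (intro sum.cong) auto
  also have "\<dots> = (\<Sum>c\<in>S. \<Sum>t\<in>in_nbrs E c. h t c)"
    using assms by (simp add: sum.inter_restrict [symmetric] Int_absorb1)
  finally show ?thesis .
qed

lemma card_lt_twice_card_values_ge:
  fixes f :: "'a \<Rightarrow> real"
  assumes "finite V" "V \<noteq> {}" "0 < eps" "\<And>t. t \<in> V \<Longrightarrow> f t \<le> 1"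
    and sum_ge: "(1/2 + eps) * card V \<le> (\<Sum>t\<in>V. f t)"
  shows "card V < 2 * card {t\<in>V. eps \<le> f t}"
proof -
  define K where "K = {t\<in>V. eps \<le> f t}"
  have "K \<subseteq> V" by (auto simp: K_def)
  have "(\<Sum>t\<in>V. f t) = (\<Sum>t\<in>K. f t) + (\<Sum>t\<in>V - K. f t)"
    using \<open>finite V\<close> \<open>K \<subseteq> V\<close> by (metis sum.subset_diff add.commute)
  also have "\<dots> \<le> (\<Sum>t\<in>K. 1) + (\<Sum>t\<in>V - K. eps)"
    using assms(4) \<open>K \<subseteq> V\<close> by (intro add_mono sum_mono) (auto simp: K_def)
  also have "\<dots> = card K + eps * (real (card V) - card K)"
    using \<open>finite V\<close> \<open>K \<subseteq> V\<close> card_mono [OF \<open>finite V\<close> \<open>K \<subseteq> V\<close>]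
    by (simp add: card_Diff_subset finite_subset of_nat_diff)
  finally have "card V / 2 + eps * card K \<le> card K"
    using sum_ge by (simp add: algebra_simps)
  show ?thesis
  proof (rule ccontr)
    assume "\<not> ?thesis"
    then have "2 * card K \<le> card V" by (simp add: K_def)
    with \<open>card V / 2 + eps * card K \<le> card K\<close> have "eps * card K \<le> 0" by simp
    with \<open>0 < eps\<close> have "card K = 0" by (simp add: mult_le_0_iff)
    with \<open>card V / 2 + eps * card K \<le> card K\<close> assms(1,2) show False by simp
  qed
qed

lemma ex_common_value_ge:
  fixes f g :: "'a \<Rightarrow> real"
  assumes "finite V" "V \<noteq> {}" "0 < eps"
    and "\<And>t. t \<in> V \<Longrightarrow> f t \<le> 1" "(1/2 + eps) * card V \<le> (\<Sum>t\<in>V. f t)"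
    and "\<And>t. t \<in> V \<Longrightarrow> g t \<le> 1" "(1/2 + eps) * card V \<le> (\<Sum>t\<in>V. g t)"
  obtains t where "t \<in> V" "eps \<le> f t" "eps \<le> g t"
proof -
  define A where "A = {t\<in>V. eps \<le> f t}"
  define B where "B = {t\<in>V. eps \<le> g t}"
  have "card V < 2 * card A" "card V < 2 * card B"
    unfolding A_def B_def using assms by (auto intro: card_lt_twice_card_values_ge)
  have "A \<inter> B \<noteq> {}"
  proof
    assume "A \<inter> B = {}"
    then have "card A + card B = card (A \<union> B)"
      using assms(1) by (intro card_Un_disjoint [symmetric]) (auto simp: A_def B_def)
    also have "\<dots> \<le> card V"
      using assms(1) by (intro card_mono) (auto simp: A_def B_def)
    finally show False using \<open>card V < 2 * card A\<close> \<open>card V < 2 * card B\<close> by linarith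
  qed
  then show ?thesis using that by (auto simp: A_def B_def)
qed

locale max_entropy_matching =
  fixes V :: "'a set" and E :: "('a \<times> 'a) set" and x :: "'a \<times> 'a \<Rightarrow> real"
  assumes digraph: "digraph V E"
    and matching: "perfect_frac_matching V E x"
    and entropy_max: "\<And>y. perfect_frac_matching V E y \<Longrightarrow> entropy E y \<le> entropy E x"
begin

lemma finite_V: "finite V" and edges_subset: "E \<subseteq> V \<times> V"
  using digraph by (auto simp: digraph_def)

lemma finite_E: "finite E"
  using finite_V edges_subset by (meson finite_SigmaI finite_subset)

lemma nonneg: "e \<in> E \<Longrightarrow> 0 \<le> x e"
  using matching by (simp add: perfect_frac_matching_def)

lemma out_sum: "v \<in> V \<Longrightarrow> (\<Sum>w\<in>out_nbrs E v. x (v, w)) = 1"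
  and in_sum: "v \<in> V \<Longrightarrow> (\<Sum>w\<in>in_nbrs E v. x (w, v)) = 1"
  using matching by (simp_all add: perfect_frac_matching_def)

lemma out_nbrs_subset: "out_nbrs E v \<subseteq> V" and in_nbrs_subset: "in_nbrs E v \<subseteq> V"
  using edges_subset by (auto simp: out_nbrs_def in_nbrs_def)

lemma circulation_log_ineq:
  fixes D :: "'a \<times> 'a \<Rightarrow> real"
  assumes supp: "\<And>e. D e \<noteq> 0 \<Longrightarrow> e \<in> E"
    and D_out: "\<And>v. (\<Sum>w\<in>out_nbrs E v. D (v, w)) = 0"
    and D_in: "\<And>v. (\<Sum>w\<in>in_nbrs E v. D (w, v)) = 0"
    and "0 < s" and pos: "\<And>e. D e \<noteq> 0 \<Longrightarrow> 0 < x e + s * D e"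
  shows "0 \<le> (\<Sum>e\<in>E. D e * ln (x e + s * D e))"
proof -
  define y where "y e = x e + s * D e" for e
  have "perfect_frac_matching V E y"
    unfolding perfect_frac_matching_def
  proof (intro conjI ballI)
    show "0 \<le> y e" if "e \<in> E" for e
      using nonneg [OF that] pos [of e] by (cases "D e = 0") (auto simp: y_def)
    show "(\<Sum>w\<in>out_nbrs E v. y (v, w)) = 1" "(\<Sum>w\<in>in_nbrs E v. y (w, v)) = 1" if "v \<in> V" for v
      using out_sum [OF that] in_sum [OF that] D_out [of v] D_in [of v]
      by (simp_all add: y_def sum.distrib sum_distrib_left [symmetric])
  qed
  then have "entropy E y \<le> entropy E x" by (rule entropy_max)
  \<comment> \<open>The tangent is taken at the perturbed point, where the logarithm is finite.\<close>
  have tangent: "entropy_term (x e) \<le> entropy_term (y e) + s * (D e * (ln (y e) + 1)) / ln 2"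
    if "e \<in> E" for e
  proof (cases "D e = 0")
    case False
    then have "0 < y e" and "x e - y e = - (s * D e)" using pos by (simp_all add: y_def)
    with entropy_term_le_tangent [OF this(1) nonneg [OF that]] show ?thesis
      by (simp add: mult.assoc)
  qed (simp add: y_def)
  have "(\<Sum>e\<in>E. D e) = 0"
    by (simp add: sum_edges_by_out_nbrs [OF finite_V edges_subset] D_out)
  have "entropy E x \<le> (\<Sum>e\<in>E. entropy_term (y e) + s * (D e * (ln (y e) + 1)) / ln 2)"
    unfolding entropy_eq_sum_entropy_term by (rule sum_mono) (rule tangent)
  also have "\<dots> = entropy E y + s / ln 2 * (\<Sum>e\<in>E. D e * ln (y e))"
    using \<open>(\<Sum>e\<in>E. D e) = 0\<close>
    by (simp add: entropy_eq_sum_entropy_term sum.distrib sum_divide_distrib [symmetric]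
        sum_distrib_left [symmetric] distrib_left)
  finally have "0 \<le> s / ln 2 * (\<Sum>e\<in>E. D e * ln (y e))"
    using \<open>entropy E y \<le> entropy E x\<close> by linarith
  with \<open>0 < s\<close> show ?thesis by (simp add: y_def zero_le_mult_iff zero_le_divide_iff)
qed

lemma hexagon_exchange_perturbed:
  fixes s :: real and r1 c1 r2 c2 r3 c3 :: 'a
  defines "y \<equiv> \<lambda>e. x e + s * hexagon_circulation r1 c1 r2 c2 r3 c3 e"
  assumes E: "(r1, c1) \<in> E" "(r2, c2) \<in> E" "(r3, c3) \<in> E" "(r1, c2) \<in> E" "(r2, c3) \<in> E" "(r3, c1) \<in> E"
    and "0 < s" and small: "3 * s < x (r1, c1)" "3 * s < x (r2, c2)" "3 * s < x (r3, c3)"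
  shows "y (r1, c1) * y (r2, c2) * y (r3, c3) \<le> y (r1, c2) * y (r2, c3) * y (r3, c1)"
proof -
  define D where "D = hexagon_circulation r1 c1 r2 c2 r3 c3"
  define neg where "neg = {(r1, c1), (r2, c2), (r3, c3)}"
  define pos where "pos = {(r1, c2), (r2, c3), (r3, c1)}"
  have supp: "e \<in> E" if "D e \<noteq> 0 \<or> e \<in> neg \<or> e \<in> pos" for e
  proof (rule ccontr)
    assume "e \<notin> E"
    then have "e \<notin> neg \<union> pos" using E by (auto simp: neg_def pos_def)
    moreover from this have "D e = 0" by (simp add: D_def hexagon_circulation_def neg_def pos_def)
    ultimately show False using that by blast
  qed
  have y_pos: "0 < y e" if "D e \<noteq> 0 \<or> e \<in> neg \<or> e \<in> pos" for e
  proof (cases "e \<in> neg")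
    case True
    then have "3 * s < x e" and "- 3 \<le> D e"
      using small by (auto simp: neg_def D_def hexagon_circulation_def)
    moreover have "s * (- 3) \<le> s * D e" using \<open>0 < s\<close> \<open>- 3 \<le> D e\<close> by (intro mult_left_mono) auto
    ultimately show ?thesis by (simp add: y_def D_def)
  next
    case False
    then have "1 \<le> D e" using that by (auto simp: D_def hexagon_circulation_def neg_def pos_def)
    then have "0 < s * D e" using \<open>0 < s\<close> by simp
    then show ?thesis using nonneg [OF supp [OF that]] by (simp add: y_def D_def)
  qed
  have "0 \<le> (\<Sum>e\<in>E. D e * ln (y e))"
    unfolding y_def D_def using supp y_pos \<open>0 < s\<close>
    by (intro circulation_log_ineq hexagon_circulation_out_sum hexagon_circulation_in_sum finite_E E)
      (auto simp: y_def D_def)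
  then have "ln (y (r1, c1)) + ln (y (r2, c2)) + ln (y (r3, c3))
      \<le> ln (y (r1, c2)) + ln (y (r2, c3)) + ln (y (r3, c1))"
    unfolding D_def sum_hexagon_circulation_mult [OF finite_E E] by simp
  moreover have "0 < y (r1, c1)" "0 < y (r2, c2)" "0 < y (r3, c3)"
      "0 < y (r1, c2)" "0 < y (r2, c3)" "0 < y (r3, c1)"
    using y_pos by (simp_all add: neg_def pos_def)
  ultimately have "ln (y (r1, c1) * y (r2, c2) * y (r3, c3)) \<le> ln (y (r1, c2) * y (r2, c3) * y (r3, c1))"
    by (simp add: ln_mult)
  then show ?thesis using y_pos by (simp add: neg_def pos_def)
qed

lemma hexagon_exchange:
  assumes E: "(r1, c1) \<in> E" "(r2, c2) \<in> E" "(r3, c3) \<in> E" "(r1, c2) \<in> E" "(r2, c3) \<in> E" "(r3, c1) \<in> E"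
  shows "x (r1, c1) * x (r2, c2) * x (r3, c3) \<le> x (r1, c2) * x (r2, c3) * x (r3, c1)"
proof (cases "0 < x (r1, c1) \<and> 0 < x (r2, c2) \<and> 0 < x (r3, c3)")
  case False
  then have "x (r1, c1) * x (r2, c2) * x (r3, c3) = 0"
    using nonneg [OF E(1)] nonneg [OF E(2)] nonneg [OF E(3)] by auto
  moreover have "0 \<le> x (r1, c2) * x (r2, c3) * x (r3, c1)"
    using nonneg E by simp
  ultimately show ?thesis by linarith
next
  case True
  define y where "y s e = x e + s * hexagon_circulation r1 c1 r2 c2 r3 c3 e" for s e
  define F where "F s = y s (r1, c2) * y s (r2, c3) * y s (r3, c1) - y s (r1, c1) * y s (r2, c2) * y s (r3, c3)"
    for s
  define m where "m = min (x (r1, c1)) (min (x (r2, c2)) (x (r3, c3)))"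
  have "(F \<longlongrightarrow> F 0) (at_right 0)"
    unfolding F_def y_def by (intro tendsto_intros)
  moreover have "eventually (\<lambda>s. 0 \<le> F s) (at_right 0)"
    unfolding eventually_at_right_field
  proof (intro exI [of _ "m / 3"] conjI allI impI)
    show "0 < m / 3" using True by (simp add: m_def)
    fix s :: real assume "0 < s" "s < m / 3"
    then show "0 \<le> F s"
      using hexagon_exchange_perturbed [OF E \<open>0 < s\<close>] by (simp add: F_def y_def m_def)
  qed
  ultimately have "0 \<le> F 0" by (rule tendsto_lowerbound) simp
  then show ?thesis by (simp add: F_def y_def)
qed

lemma sum_le_mult_row_mass:
  assumes "q \<in> V" "0 \<le> \<beta>" "\<And>c. c \<in> out_nbrs E q \<inter> S \<Longrightarrow> \<alpha> c \<le> \<beta> * x (q, c)"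
  shows "(\<Sum>c\<in>out_nbrs E q \<inter> S. \<alpha> c) \<le> \<beta>"
proof -
  have "(\<Sum>c\<in>out_nbrs E q \<inter> S. \<alpha> c) \<le> \<beta> * (\<Sum>c\<in>out_nbrs E q \<inter> S. x (q, c))"
    unfolding sum_distrib_left by (rule sum_mono) (rule assms(3))
  also have "\<dots> \<le> \<beta> * 1"
    using assms(1,2) matching finite_E by (intro mult_left_mono perfect_frac_matching_row_mass_le_1)
  finally show ?thesis by simp
qed

(* A hexagon whose third row carries positive weight into c1 collapses to a square. *)
lemma square_exchange:
  assumes "(r1, c1) \<in> E" "(r2, c2) \<in> E" "(r1, c2) \<in> E" "(r2, c1) \<in> E"
  shows "x (r1, c1) * x (r2, c2) \<le> x (r1, c2) * x (r2, c1)"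
proof -
  have "(\<Sum>t\<in>in_nbrs E c1. x (t, c1)) = 1"
    using assms(1) edges_subset by (intro in_sum) auto
  then obtain t where "t \<in> in_nbrs E c1" "0 < x (t, c1)"
    by (metis not_le sum_nonpos zero_less_one)
  then have "(t, c1) \<in> E" by (simp add: in_nbrs_def)
  from hexagon_exchange [OF assms(1,2) this assms(3,4) this]
  have "(x (r1, c1) * x (r2, c2)) * x (t, c1) \<le> (x (r1, c2) * x (r2, c1)) * x (t, c1)" .
  with \<open>0 < x (t, c1)\<close> show ?thesis by simp
qed

lemma square_exchange_sum:
  assumes "(v, w) \<in> E" "(v', w) \<in> E"
  shows "x (v, w) * (\<Sum>c\<in>out_nbrs E v' \<inter> out_nbrs E v. x (v', c)) \<le> x (v', w)"
proof -
  have "v \<in> V" using assms(1) edges_subset by auto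
  have "(\<Sum>c\<in>out_nbrs E v \<inter> out_nbrs E v'. x (v, w) * x (v', c)) \<le> x (v', w)"
    using \<open>v \<in> V\<close> nonneg [OF assms(2)] assms
    by (intro sum_le_mult_row_mass) (auto simp: out_nbrs_def mult.commute intro: square_exchange)
  then show ?thesis by (simp add: sum_distrib_left Int_commute)
qed

lemma hexagon_exchange_sum:
  assumes "(u, w) \<in> E" "(v, w) \<in> E" "t \<in> V"
  shows "x (u, w) * (\<Sum>c\<in>out_nbrs E t \<inter> out_nbrs E v. x (v, c))
           * (\<Sum>b\<in>out_nbrs E t \<inter> out_nbrs E u. x (t, b)) \<le> x (v, w)"
proof -
  have "u \<in> V" using assms(1) edges_subset by auto
  define f where "f = (\<Sum>c\<in>out_nbrs E t \<inter> out_nbrs E v. x (v, c))"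
  have "x (u, w) * x (t, b) * f \<le> x (v, w) * x (u, b)" if b: "b \<in> out_nbrs E t \<inter> out_nbrs E u" for b
  proof -
    have "(\<Sum>c\<in>out_nbrs E t \<inter> out_nbrs E v. x (u, w) * x (t, b) * x (v, c)) \<le> x (v, w) * x (u, b)"
    proof (rule sum_le_mult_row_mass [OF \<open>t \<in> V\<close>])
      show "0 \<le> x (v, w) * x (u, b)" using b assms nonneg by (simp add: out_nbrs_def)
      fix c assume "c \<in> out_nbrs E t \<inter> out_nbrs E v"
      with b assms have "x (u, w) * x (t, b) * x (v, c) \<le> x (u, b) * x (t, c) * x (v, w)"
        by (intro hexagon_exchange) (auto simp: out_nbrs_def)
      then show "x (u, w) * x (t, b) * x (v, c) \<le> x (v, w) * x (u, b) * x (t, c)"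
        by (simp add: ac_simps)
    qed
    then show ?thesis by (simp add: f_def sum_distrib_left)
  qed
  then have "(\<Sum>b\<in>out_nbrs E u \<inter> out_nbrs E t. x (u, w) * f * x (t, b)) \<le> x (v, w)"
    using nonneg [OF assms(2)] by (intro sum_le_mult_row_mass [OF \<open>u \<in> V\<close>]) (auto simp: ac_simps)
  then show ?thesis by (simp add: f_def sum_distrib_left Int_commute)
qed

end

locale dense_max_entropy_matching = max_entropy_matching +
  fixes n :: nat and eps :: real
  assumes dense: "n_eps_digraph n eps V E" and eps_pos: "0 < eps"
begin

lemma card_V: "card V = n"
  using dense by (simp add: n_eps_digraph_def)

lemma out_degree: "v \<in> V \<Longrightarrow> (1/2 + eps) * n \<le> card (out_nbrs E v)"
  and in_degree: "v \<in> V \<Longrightarrow> (1/2 + eps) * n \<le> card (in_nbrs E v)"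
  using dense by (simp_all add: n_eps_digraph_def)

lemma n_pos: "v \<in> V \<Longrightarrow> 0 < n"
  using finite_V card_V by (metis card_gt_0_iff empty_iff)

lemma upper_bound:
  assumes "(v, w) \<in> E"
  shows "x (v, w) \<le> 1 / (2 * eps * n)"
proof -
  have "v \<in> V" "w \<in> V" using assms edges_subset by auto
  \<comment> \<open>All rows together carry at most n - |N+(v)| outside N+(v), so the rows of the
    in-neighbours of w carry at least 2 eps n inside N+(v).\<close>
  define M where "M v' = (\<Sum>c\<in>out_nbrs E v' \<inter> out_nbrs E v. x (v', c))" for v'
  define N where "N v' = (\<Sum>c\<in>out_nbrs E v' \<inter> (V - out_nbrs E v). x (v', c))" for v'
  have M_eq: "M v' = 1 - N v'" if "v' \<in> V" for v'
  proof -
    have "out_nbrs E v' - (V - out_nbrs E v) = out_nbrs E v' \<inter> out_nbrs E v"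
      using out_nbrs_subset by blast
    then show ?thesis
      using out_sum [OF that] sum.Int_Diff [OF finite_out_nbrs [OF finite_E],
          where g = "\<lambda>c. x (v', c)" and B = "V - out_nbrs E v"]
      by (simp add: M_def N_def)
  qed
  have "(\<Sum>v'\<in>V. N v') = (\<Sum>c\<in>V - out_nbrs E v. \<Sum>t\<in>in_nbrs E c. x (t, c))"
    unfolding N_def by (rule sum_out_nbrs_Int_swap [OF finite_V edges_subset]) blast
  also have "\<dots> = card (V - out_nbrs E v)" by (simp add: in_sum)
  also have "\<dots> = real n - card (out_nbrs E v)"
    using card_Diff_subset [OF finite_subset [OF out_nbrs_subset finite_V] out_nbrs_subset]
      card_mono [OF finite_V out_nbrs_subset] card_V
    by (simp add: of_nat_diff)
  moreover have "(\<Sum>v'\<in>in_nbrs E w. N v') \<le> (\<Sum>v'\<in>V. N v')"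
    using nonneg unfolding N_def
    by (intro sum_mono2 [OF finite_V in_nbrs_subset] sum_nonneg) (simp add: out_nbrs_def)
  ultimately have "(\<Sum>v'\<in>in_nbrs E w. N v') \<le> real n - (1/2 + eps) * n"
    using out_degree [OF \<open>v \<in> V\<close>] by linarith
  moreover have "(\<Sum>v'\<in>in_nbrs E w. M v') = (\<Sum>v'\<in>in_nbrs E w. 1 - N v')"
    using in_nbrs_subset M_eq by (intro sum.cong) auto
  ultimately have "2 * eps * n \<le> (\<Sum>v'\<in>in_nbrs E w. M v')"
    using in_degree [OF \<open>w \<in> V\<close>] by (simp add: sum_subtractf algebra_simps)
  then have "x (v, w) * (2 * eps * n) \<le> (\<Sum>v'\<in>in_nbrs E w. x (v, w) * M v')"
    using nonneg [OF assms] by (simp add: sum_distrib_left [symmetric] mult_left_mono)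
  also have "\<dots> \<le> (\<Sum>v'\<in>in_nbrs E w. x (v', w))"
    unfolding M_def using assms by (intro sum_mono square_exchange_sum) (simp_all add: in_nbrs_def)
  also have "\<dots> = 1" using \<open>w \<in> V\<close> by (rule in_sum)
  finally have "x (v, w) * (2 * eps * n) \<le> 1" .
  moreover have "0 < 2 * eps * n" using eps_pos n_pos [OF \<open>v \<in> V\<close>] by simp
  ultimately show ?thesis by (simp add: pos_le_divide_eq)
qed

lemma ex_heavy_in_nbr:
  assumes "w \<in> V"
  obtains u where "(u, w) \<in> E" "1 / n \<le> x (u, w)"
proof -
  have "\<exists>u\<in>in_nbrs E w. 1 / n \<le> x (u, w)"
  proof (rule ccontr)
    assume "\<not> ?thesis"
    moreover have "in_nbrs E w \<noteq> {}" using in_sum [OF assms] by auto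
    ultimately have "(\<Sum>u\<in>in_nbrs E w. x (u, w)) < (\<Sum>u\<in>in_nbrs E w. 1 / n)"
      by (intro sum_strict_mono finite_in_nbrs finite_E) auto
    also have "\<dots> \<le> 1"
      using card_mono [OF finite_V in_nbrs_subset] card_V n_pos [OF assms] by simp
    finally show False using in_sum [OF assms] by simp
  qed
  then show ?thesis using that by (auto simp: in_nbrs_def)
qed

lemma sum_row_mass_on_out_nbrs_ge:
  assumes "v \<in> V"
  shows "(1/2 + eps) * card V \<le> (\<Sum>t\<in>V. \<Sum>c\<in>out_nbrs E t \<inter> out_nbrs E v. x (v, c))"
proof -
  have "(1/2 + eps) * card V = (\<Sum>c\<in>out_nbrs E v. x (v, c) * ((1/2 + eps) * n))"
    using out_sum [OF assms] card_V by (simp add: sum_distrib_right [symmetric])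
  also have "\<dots> \<le> (\<Sum>c\<in>out_nbrs E v. x (v, c) * card (in_nbrs E c))"
    using out_nbrs_subset nonneg by (intro sum_mono mult_left_mono in_degree) (auto simp: out_nbrs_def)
  also have "\<dots> = (\<Sum>t\<in>V. \<Sum>c\<in>out_nbrs E t \<inter> out_nbrs E v. x (v, c))"
    by (simp add: sum_out_nbrs_Int_swap [OF finite_V edges_subset out_nbrs_subset] mult.commute)
  finally show ?thesis .
qed

lemma sum_mass_on_out_nbrs_ge:
  assumes "u \<in> V"
  shows "(1/2 + eps) * card V \<le> (\<Sum>t\<in>V. \<Sum>b\<in>out_nbrs E t \<inter> out_nbrs E u. x (t, b))"
proof -
  have "(\<Sum>t\<in>V. \<Sum>b\<in>out_nbrs E t \<inter> out_nbrs E u. x (t, b))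
      = (\<Sum>b\<in>out_nbrs E u. \<Sum>t\<in>in_nbrs E b. x (t, b))"
    by (rule sum_out_nbrs_Int_swap [OF finite_V edges_subset out_nbrs_subset])
  also have "\<dots> = (\<Sum>b\<in>out_nbrs E u. 1)"
    using out_nbrs_subset in_sum by (intro sum.cong) auto
  finally show ?thesis using out_degree [OF assms] card_V by simp
qed

lemma lower_bound:
  assumes "(v, w) \<in> E"
  shows "eps\<^sup>2 / n \<le> x (v, w)"
proof -
  have "v \<in> V" "w \<in> V" using assms edges_subset by auto
  obtain u where "(u, w) \<in> E" "1 / n \<le> x (u, w)" using ex_heavy_in_nbr [OF \<open>w \<in> V\<close>] .
  then have "u \<in> V" using edges_subset by auto
  define f where "f t = (\<Sum>c\<in>out_nbrs E t \<inter> out_nbrs E v. x (v, c))" for t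
  define g where "g t = (\<Sum>b\<in>out_nbrs E t \<inter> out_nbrs E u. x (t, b))" for t
  have "f t \<le> 1" for t
    unfolding f_def Int_commute [of "out_nbrs E t"]
    by (rule perfect_frac_matching_row_mass_le_1 [OF matching finite_E \<open>v \<in> V\<close>])
  moreover have "g t \<le> 1" if "t \<in> V" for t
    unfolding g_def by (rule perfect_frac_matching_row_mass_le_1 [OF matching finite_E that])
  ultimately obtain t where "t \<in> V" "eps \<le> f t" "eps \<le> g t"
    using ex_common_value_ge [OF finite_V _ eps_pos _
        sum_row_mass_on_out_nbrs_ge [OF \<open>v \<in> V\<close>, folded f_def] _
        sum_mass_on_out_nbrs_ge [OF \<open>u \<in> V\<close>, folded g_def]] \<open>v \<in> V\<close>
    by blast
  have "eps\<^sup>2 / n = 1 / n * eps * eps" by (simp add: power2_eq_square)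
  also have "\<dots> \<le> x (u, w) * f t * g t"
    using \<open>1 / n \<le> x (u, w)\<close> \<open>eps \<le> f t\<close> \<open>eps \<le> g t\<close> eps_pos nonneg [OF \<open>(u, w) \<in> E\<close>]
    by (intro mult_mono mult_nonneg_nonneg) auto
  also have "\<dots> \<le> x (v, w)"
    unfolding f_def g_def by (rule hexagon_exchange_sum [OF \<open>(u, w) \<in> E\<close> assms \<open>t \<in> V\<close>])
  finally show ?thesis .
qed

lemma b_normal:
  assumes "1 / eps\<^sup>2 \<le> b" "eps \<le> 1"
  shows "b_normal b V E x"
  unfolding b_normal_def card_V
proof
  fix e assume "e \<in> E"
  then obtain v w where "e = (v, w)" "(v, w) \<in> E" by (cases e) auto
  have "0 < n" using \<open>(v, w) \<in> E\<close> edges_subset n_pos by auto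
  have "0 < 1 / eps\<^sup>2" using eps_pos by simp
  then have "0 < b" using assms(1) by linarith
  then have "1 / b \<le> eps\<^sup>2"
    using assms(1) eps_pos by (simp add: field_simps)
  then have "1 / (b * n) \<le> eps\<^sup>2 / n"
    using \<open>0 < n\<close> by (simp add: divide_right_mono flip: divide_divide_eq_left)
  moreover have "eps\<^sup>2 \<le> 2 * eps" using assms(2) eps_pos by (simp add: power2_eq_square)
  then have "1 / (2 * eps) \<le> 1 / eps\<^sup>2" using eps_pos by (intro divide_left_mono) auto
  then have "1 / (2 * eps) \<le> b" using assms(1) by linarith
  then have "1 / (2 * eps * n) \<le> b / n"
    using \<open>0 < n\<close> by (simp add: divide_right_mono flip: divide_divide_eq_left)
  ultimately show "1 / (b * n) \<le> x e \<and> x e \<le> b / n"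
    using lower_bound [OF \<open>(v, w) \<in> E\<close>] upper_bound [OF \<open>(v, w) \<in> E\<close>] \<open>e = (v, w)\<close> by simp
qed

end

lemma b_normal_perfect_frac_matching_exists:
  assumes "n_eps_digraph n eps V E" "0 < eps" "eps \<le> 1" "1 / eps\<^sup>2 \<le> b"
    and "perfect_frac_matching V E m"
  obtains x where "perfect_frac_matching V E x" "b_normal b V E x" "entropy E m \<le> entropy E x"
proof -
  have "digraph V E" using assms(1) by (simp add: n_eps_digraph_def)
  then obtain x where x: "perfect_frac_matching V E x"
    and x_max: "\<And>y. perfect_frac_matching V E y \<Longrightarrow> entropy E y \<le> entropy E x"
    using max_entropy_perfect_frac_matching_exists [OF _ _ assms(5)] by (auto simp: digraph_def)
  interpret dense_max_entropy_matching V E x n eps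
    using \<open>digraph V E\<close> x x_max assms(1,2) by unfold_locales
  show ?thesis using that x b_normal [OF assms(4,3)] x_max [OF assms(5)] by blast
qed

theorem theorem4p4:
  "\<forall>eps::real. 0 < eps \<and> eps \<le> 1 \<longrightarrow>
     (\<exists>b0::real. \<forall>b\<ge>b0. \<exists>n0::nat. \<forall>n\<ge>n0.
        \<forall>(V::nat set) E m.
          n_eps_digraph n eps V E \<longrightarrow> perfect_frac_matching V E m \<longrightarrow>
          entropy E m \<ge> real n * log 2 (real n / 2) + eps * real n \<longrightarrow>
          (\<exists>x. perfect_frac_matching V E x \<and> b_normal b V E x \<and>
               entropy E x \<ge> entropy E m - eps * real n))"
proof (intro allI impI)
  fix eps :: real assume eps: "0 < eps \<and> eps \<le> 1"
  show "\<exists>b0::real. \<forall>b\<ge>b0. \<exists>n0::nat. \<forall>n\<ge>n0.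
        \<forall>(V::nat set) E m.
          n_eps_digraph n eps V E \<longrightarrow> perfect_frac_matching V E m \<longrightarrow>
          entropy E m \<ge> real n * log 2 (real n / 2) + eps * real n \<longrightarrow>
          (\<exists>x. perfect_frac_matching V E x \<and> b_normal b V E x \<and>
               entropy E x \<ge> entropy E m - eps * real n)"
  proof (intro exI [of _ "1 / eps\<^sup>2"] allI impI exI [of _ "0::nat"])
    fix b :: real and n :: nat and V :: "nat set" and E m
    assume "1 / eps\<^sup>2 \<le> b" "n_eps_digraph n eps V E" "perfect_frac_matching V E m"
    with eps obtain x where "perfect_frac_matching V E x" "b_normal b V E x"
      and "entropy E m \<le> entropy E x"
      by (metis b_normal_perfect_frac_matching_exists)
    moreover have "0 \<le> eps * n" using eps by simp
    ultimately show "\<exists>x. perfect_frac_matching V E x \<and> b_normal b V E x \<and>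
        entropy E x \<ge> entropy E m - eps * n"
      by (intro exI [of _ x]) auto
  qed
qed

end
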